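(* Under the standing assumptions below, the Bellman operator $\mathcal B$ maps $\mathcal N$ into itself: $\mathcal B(\mathcal N)\subset\mathcal N$.
   Context: Setup. Let $\mathcal S$ be a finite set and $(s_t)_{t\ge0}$ a Markov chain on $\mathcal S$ with transition probabilities $\pi(s'|s)>0$ for all $s,s'\in\mathcal S$; $\mathbb E_{s_t}$ denotes expectation over future shocks conditional on the history $s^t=(s_0,\dots,s_t)$. Let $\mathcal A\subset\mathbb R^n$ be a finite set, $\mathcal X\subseteq\mathbb R^m$ a countable set, $\zeta:\mathcal X\times\mathcal A\times\mathcal S\to\mathcal X$, $p:\mathcal X\times\mathcal A\times\mathcal S\to\mathbb R$, $r,g^1,\dots,g^I:\mathcal X\times\mathcal A\times\mathcal S\to\mathbb R$ bounded functions, $\bar g^1,\dots,\bar g^I\in\mathbb R$ and $\beta\in(0,1)$. A plan is a family $a=(a(s^t))_{t\ge0,\,s^t\in\mathcal S^{t+1}}$ with $a(s^t)\in\mathcal A$; given $x_0$ it induces states $x(s^0)=x_0$, $x(s^{t+1})=\zeta(x(s^t),a(s^t),s_t)$. Let $\tilde{\mathcal A}(x,s)=\{a\in\mathcal A:p(x,a,s)\ge0\}$ and $\tilde{\mathcal A}^\infty(x_0)$ the set of plans with $a(s^t)\in\tilde{\mathcal A}(x(s^t),s_t)$ for all $t,s^t$. A plan is feasible for $(x_0,s_0)$ if it lies in $\tilde{\mathcal A}^\infty(x_0)$ and $\mathbb E_{s_t}\sum_{n\ge0}\beta^ng^i(x(s^{t+n}),a(s^{t+n}),s_{t+n})\ge\bar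 g^i$ for all $t,s^t,i$. Standing assumption: for every $(x_0,s_0)$ a feasible plan exists. Function spaces. Let $L=(\|r\|_\infty+\sum_{i=1}^I\|g^i\|_\infty)/(1-\beta)$, $B(k)=\{\gamma\in\mathbb R^I_+:\|\gamma\|_\infty\le k\}$, and enumerate $\mathcal S=\{s_1,\dots,s_{|\mathcal S|}\}$, $\mathcal X=\{x_1,x_2,\dots\}$. $\mathcal M$ is the set of $F:\mathbb R^I_+\times\mathcal X\times\mathcal S\to\mathbb R$ with $F(\cdot,x,s)\in L^\infty(B(k))$ for all $k\in\mathbb N_+$, $x,s$, and $\|F\|_{\mathcal M}:=\sum_{i}2^{-i}\sum_j2^{-j}\sum_{k\ge1}2^{-k}\|F(\cdot,x_j,s_i)\|_{L^\infty(B(k))}<\infty$. $\mathcal N\subset\mathcal M$ is the set of $F\in\mathcal M$ such that for all $x,s$: (i) $F(\cdot,x,s)$ is convex; (ii) $|F(\gamma_1,x,s)-F(\gamma_2,x,s)|\le L\|\gamma_1-\gamma_2\|_1$; (iii) $F(\gamma,x,s)\ge v^0+\sum_i\gamma^iv^i$ for every feasible plan for $(x,s)$, where $v^0=\mathbb E_{s}\sum_t\beta^tr(x(s^t),a(s^t),s_t)$, $v^i=\mathbb E_s\sum_t\beta^tg^i(x(s^t),a(s^t),s_t)$ (with $x_0=x,s_0=s$); (iv) $F(\gamma,x,s)\le(1+\sum_i\gamma^i)L$. Bellman operator: for $F:\mathbb R^I_+\times\mathcal X\times\mathcal S\to\mathbb R$, $\mathcal B(F)(\gamma,x,s)=\inf_{\lambda\in\mathbb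 R^I_+}\sup_{a\in\tilde{\mathcal A}(x,s)}\big[r(x,a,s)+\sum_i(\gamma^ig^i(x,a,s)+\lambda^i(g^i(x,a,s)-\bar g^i))+\beta\mathbb E_sF(\gamma+\lambda,\zeta(x,a,s),s')\big]$, where $\mathbb E_s$ is expectation over $s'\sim\pi(\cdot|s)$. *)

theory Defs
  imports "HOL-Probability.Probability"
begin

text \<open>Histories s^t = (s_0,...,s_t) are nonempty lists of shocks.
  The state path induced by a plan a from x_0: x(s^0) = x_0,
  x(s^{t+1}) = zeta(x(s^t), a(s^t), s_t).  xrev works on reversed histories.\<close>

fun xrev :: "('x \<Rightarrow> 'a \<Rightarrow> 's \<Rightarrow> 'x) \<Rightarrow> ('s list \<Rightarrow> 'a) \<Rightarrow> 'x \<Rightarrow> 's list \<Rightarrow> 'x" where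
  "xrev zeta a x0 [] = x0"
| "xrev zeta a x0 [s] = x0"
| "xrev zeta a x0 (s # s' # r) = zeta (xrev zeta a x0 (s' # r)) (a (rev (s' # r))) s'"

definition xstate :: "('x \<Rightarrow> 'a \<Rightarrow> 's \<Rightarrow> 'x) \<Rightarrow> ('s list \<Rightarrow> 'a) \<Rightarrow> 'x \<Rightarrow> 's list \<Rightarrow> 'x" where
  "xstate zeta a x0 h = xrev zeta a x0 (rev h)"

text \<open>Probability of a continuation c = (s_{t+1},...,s_{t+n}) of the chain started at s.
  Ptr s s' is the transition probability Ptr(s'|s).\<close>

fun cont_prob :: "('s \<Rightarrow> 's \<Rightarrow> real) \<Rightarrow> 's \<Rightarrow> 's list \<Rightarrow> real" where
  "cont_prob Ptr s [] = 1"
| "cont_prob Ptr s (s' # c) = Ptr s s' * cont_prob Ptr s' c"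

text \<open>E_{s_t} f(s^{t+n}): conditional expectation given the history h = s^t.\<close>

definition cond_exp :: "('s::finite \<Rightarrow> 's \<Rightarrow> real) \<Rightarrow> 's list \<Rightarrow> nat \<Rightarrow> ('s list \<Rightarrow> real) \<Rightarrow> real" where
  "cond_exp Ptr h n f = (\<Sum>c\<in>{c. length c = n}. cont_prob Ptr (last h) c * f (h @ c))"

text \<open>E_{s_t} sum_{n>=0} beta^n f(s^{t+n}) (f bounded, so expectation and sum commute).\<close>

definition disc_val :: "('s::finite \<Rightarrow> 's \<Rightarrow> real) \<Rightarrow> real \<Rightarrow> 's list \<Rightarrow> ('s list \<Rightarrow> real) \<Rightarrow> real" where
  "disc_val Ptr beta h f = (\<Sum>n. beta ^ n * cond_exp Ptr h n f)"

definition Atil :: "'a set \<Rightarrow> ('x \<Rightarrow> 'a \<Rightarrow> 's \<Rightarrow> real) \<Rightarrow> 'x \<Rightarrow> 's \<Rightarrow> 'a set" where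
  "Atil A p x s = {a\<in>A. p x a s \<ge> 0}"

definition feasible :: "('s::finite \<Rightarrow> 's \<Rightarrow> real) \<Rightarrow> real \<Rightarrow> 'a set \<Rightarrow> ('x \<Rightarrow> 'a \<Rightarrow> 's \<Rightarrow> 'x)
   \<Rightarrow> ('x \<Rightarrow> 'a \<Rightarrow> 's \<Rightarrow> real) \<Rightarrow> ('i \<Rightarrow> 'x \<Rightarrow> 'a \<Rightarrow> 's \<Rightarrow> real) \<Rightarrow> ('i \<Rightarrow> real)
   \<Rightarrow> 'x \<Rightarrow> 's \<Rightarrow> ('s list \<Rightarrow> 'a) \<Rightarrow> bool" where
  "feasible Ptr beta A zeta p g gbar x0 s0 a \<longleftrightarrow>
     (\<forall>h. h \<noteq> [] \<and> hd h = s0 \<longrightarrow> a h \<in> Atil A p (xstate zeta a x0 h) (last h)) \<and>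
     (\<forall>h i. h \<noteq> [] \<and> hd h = s0 \<longrightarrow>
        disc_val Ptr beta h (\<lambda>h'. g i (xstate zeta a x0 h') (a h') (last h')) \<ge> gbar i)"

definition plan_val :: "('s::finite \<Rightarrow> 's \<Rightarrow> real) \<Rightarrow> real \<Rightarrow> ('x \<Rightarrow> 'a \<Rightarrow> 's \<Rightarrow> 'x)
   \<Rightarrow> ('x \<Rightarrow> 'a \<Rightarrow> 's \<Rightarrow> real) \<Rightarrow> 'x \<Rightarrow> 's \<Rightarrow> ('s list \<Rightarrow> 'a) \<Rightarrow> real" where
  "plan_val Ptr beta zeta f x0 s0 a = disc_val Ptr beta [s0] (\<lambda>h. f (xstate zeta a x0 h) (a h) (last h))"

definition supnorm :: "'x set \<Rightarrow> 'a set \<Rightarrow> ('x \<Rightarrow> 'a \<Rightarrow> 's \<Rightarrow> real) \<Rightarrow> real" where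
  "supnorm X A f = (SUP z \<in> X \<times> A \<times> UNIV. \<bar>f (fst z) (fst (snd z)) (snd (snd z))\<bar>)"

definition Lconst :: "real \<Rightarrow> 'x set \<Rightarrow> 'a set \<Rightarrow> ('x \<Rightarrow> 'a \<Rightarrow> 's \<Rightarrow> real)
   \<Rightarrow> ('i::finite \<Rightarrow> 'x \<Rightarrow> 'a \<Rightarrow> 's \<Rightarrow> real) \<Rightarrow> real" where
  "Lconst beta X A r g = (supnorm X A r + (\<Sum>i\<in>UNIV. supnorm X A (g i))) / (1 - beta)"

definition Bk :: "real \<Rightarrow> (real^'i) set" where
  "Bk k = {\<gamma>. \<forall>i. 0 \<le> \<gamma> $ i \<and> \<gamma> $ i \<le> k}"

definition nonneg :: "(real^'i) set" where
  "nonneg = {\<gamma>. \<forall>i. 0 \<le> \<gamma> $ i}"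

text \<open>L^infinity(K) norm w.r.t. Lebesgue measure; it is finite iff f is in L^infinity(K)
  (esssup is \<infinity> for non-measurable functions).\<close>
definition Linf_norm :: "(real^'i) set \<Rightarrow> (real^'i \<Rightarrow> real) \<Rightarrow> ereal" where
  "Linf_norm K f = esssup (restrict_space lebesgue K) (\<lambda>\<gamma>. ereal \<bar>f \<gamma>\<bar>)"

text \<open>The space M, relative to enumerations se of S (indices 1..|S|) and xe of X
  (indices J = {1..|X|} or {1,2,...}).\<close>
definition enum_index :: "'x set \<Rightarrow> nat set" where
  "enum_index X = {j. 1 \<le> j \<and> (finite X \<longrightarrow> j \<le> card X)}"

definition M_norm :: "(nat \<Rightarrow> 's) \<Rightarrow> (nat \<Rightarrow> 'x) \<Rightarrow> 'x set
    \<Rightarrow> (real^'i \<Rightarrow> 'x \<Rightarrow> 's \<Rightarrow> real) \<Rightarrow> ereal" where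
  "M_norm se xe X F =
     (\<Sum>i\<in>{1..CARD('s)}. ereal ((1/2) ^ i) *
        (\<Sum>j. (if j \<in> enum_index X then ereal ((1/2) ^ j) else 0) *
           (\<Sum>k. ereal ((1/2) ^ Suc k) *
               Linf_norm (Bk (real (Suc k))) (\<lambda>\<gamma>. F \<gamma> (xe j) (se i)))))"

definition Mspace :: "(nat \<Rightarrow> 's) \<Rightarrow> (nat \<Rightarrow> 'x) \<Rightarrow> 'x set
    \<Rightarrow> (real^'i \<Rightarrow> 'x \<Rightarrow> 's \<Rightarrow> real) set" where
  "Mspace se xe X = {F. (\<forall>x\<in>X. \<forall>s. \<forall>k::nat. k \<ge> 1 \<longrightarrow>
                           Linf_norm (Bk (real k)) (\<lambda>\<gamma>. F \<gamma> x s) < \<infinity>)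
                       \<and> M_norm se xe X F < \<infinity>}"

definition Nspace :: "(nat \<Rightarrow> 's::finite) \<Rightarrow> (nat \<Rightarrow> 'x) \<Rightarrow> 'x set
    \<Rightarrow> ('s \<Rightarrow> 's \<Rightarrow> real) \<Rightarrow> real \<Rightarrow> 'a set \<Rightarrow> ('x \<Rightarrow> 'a \<Rightarrow> 's \<Rightarrow> 'x)
    \<Rightarrow> ('x \<Rightarrow> 'a \<Rightarrow> 's \<Rightarrow> real) \<Rightarrow> ('x \<Rightarrow> 'a \<Rightarrow> 's \<Rightarrow> real)
    \<Rightarrow> ('i::finite \<Rightarrow> 'x \<Rightarrow> 'a \<Rightarrow> 's \<Rightarrow> real) \<Rightarrow> ('i \<Rightarrow> real)
    \<Rightarrow> (real^'i \<Rightarrow> 'x \<Rightarrow> 's \<Rightarrow> real) set" where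
  "Nspace se xe X Ptr beta A zeta p r g gbar =
    {F \<in> Mspace se xe X. \<forall>x\<in>X. \<forall>s.
       convex_on nonneg (\<lambda>\<gamma>. F \<gamma> x s) \<and>
       (\<forall>\<gamma>1\<in>nonneg. \<forall>\<gamma>2\<in>nonneg. \<bar>F \<gamma>1 x s - F \<gamma>2 x s\<bar>
            \<le> Lconst beta X A r g * (\<Sum>i\<in>UNIV. \<bar>\<gamma>1 $ i - \<gamma>2 $ i\<bar>)) \<and>
       (\<forall>\<gamma>\<in>nonneg. \<forall>a. feasible Ptr beta A zeta p g gbar x s a \<longrightarrow>
            F \<gamma> x s \<ge> plan_val Ptr beta zeta r x s a
                      + (\<Sum>i\<in>UNIV. \<gamma> $ i * plan_val Ptr beta zeta (g i) x s a)) \<and>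
       (\<forall>\<gamma>\<in>nonneg. F \<gamma> x s \<le> (1 + (\<Sum>i\<in>UNIV. \<gamma> $ i)) * Lconst beta X A r g)}"

definition Bellman :: "('s::finite \<Rightarrow> 's \<Rightarrow> real) \<Rightarrow> real \<Rightarrow> 'a set \<Rightarrow> ('x \<Rightarrow> 'a \<Rightarrow> 's \<Rightarrow> 'x)
    \<Rightarrow> ('x \<Rightarrow> 'a \<Rightarrow> 's \<Rightarrow> real) \<Rightarrow> ('x \<Rightarrow> 'a \<Rightarrow> 's \<Rightarrow> real)
    \<Rightarrow> ('i::finite \<Rightarrow> 'x \<Rightarrow> 'a \<Rightarrow> 's \<Rightarrow> real) \<Rightarrow> ('i \<Rightarrow> real)
    \<Rightarrow> (real^'i \<Rightarrow> 'x \<Rightarrow> 's \<Rightarrow> real) \<Rightarrow> (real^'i \<Rightarrow> 'x \<Rightarrow> 's \<Rightarrow> real)" where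
  "Bellman Ptr beta A zeta p r g gbar F = (\<lambda>\<gamma> x s.
     INF lam\<in>nonneg. SUP a\<in>Atil A p x s.
        r x a s + (\<Sum>i\<in>UNIV. \<gamma> $ i * g i x a s + lam $ i * (g i x a s - gbar i))
        + beta * (\<Sum>s'\<in>UNIV. Ptr s s' * F (\<gamma> + lam) (zeta x a s) s'))"

end

theory Submission
  imports Defs
begin

(* For fixed (x, s) the Bellman operator is an infimum over multipliers \<mu> \<ge> 0 of a maximum over
   the finitely many admissible actions of an objective that is affine in (\<gamma>, \<mu>) except for the
   continuation term \<beta> E F(\<gamma> + \<mu>, \<zeta>(x, a, s), s').  Convexity of F therefore survives: a finite
   maximum of jointly convex functions is jointly convex, and partial minimisation over \<mu>
   preserves convexity.  Changing \<gamma> moves the objective by at most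
   (\<Sum>i \<parallel>g\<^sup>i\<parallel> + \<beta> L) \<parallel>\<gamma>1 - \<gamma>2\<parallel>\<^sub>1 \<le> L \<parallel>\<gamma>1 - \<gamma>2\<parallel>\<^sub>1, and taking \<mu> = 0 gives the growth bound, since
   (1 - \<beta>) L = \<parallel>r\<parallel> + \<Sum>i \<parallel>g\<^sup>i\<parallel>.
   For the lower bound, the value of a feasible plan splits into its first-period payoff and the
   values of its continuation plans; these are feasible again and hence bounded by F at \<gamma> + \<mu>,
   while \<mu> \<cdot> (v - gbar) \<ge> 0 by feasibility.  Finally B F is Lipschitz, hence continuous, with
   linear growth in \<gamma>, so all the L\<infinity> norms defining M are finite and their weighted sums
   converge. *)

section \<open>Discounted expectations along the chain\<close>

lemma cond_exp_0 [simp]: "cond_exp Ptr h 0 f = f h"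
  by (simp add: cond_exp_def)

lemma cond_exp_Suc:
  fixes Ptr :: "'s::finite \<Rightarrow> 's \<Rightarrow> real"
  shows "cond_exp Ptr h (Suc n) f = (\<Sum>s'\<in>UNIV. Ptr (last h) s' * cond_exp Ptr (h @ [s']) n f)"
proof -
  have lists: "{c::'s list. length c = Suc n} = (\<lambda>(s', c). s' # c) ` (UNIV \<times> {c. length c = n})"
    by (auto simp: length_Suc_conv)
  have inj: "inj_on (\<lambda>(s', c). s' # c) (UNIV \<times> {c::'s list. length c = n})"
    by (auto simp: inj_on_def)
  have "cond_exp Ptr h (Suc n) f = (\<Sum>(s', c)\<in>UNIV \<times> {c. length c = n}.
      Ptr (last h) s' * (cont_prob Ptr s' c * f (h @ s' # c)))"
    unfolding cond_exp_def lists sum.reindex[OF inj] by (simp add: case_prod_beta mult.assoc)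
  then show ?thesis
    by (simp add: cond_exp_def sum.cartesian_product[symmetric] sum_distrib_left)
qed

lemma cond_exp_Cons: "h \<noteq> [] \<Longrightarrow> cond_exp Ptr (s # h) n f = cond_exp Ptr h n (\<lambda>h'. f (s # h'))"
  by (simp add: cond_exp_def)

lemma disc_val_Cons: "h \<noteq> [] \<Longrightarrow> disc_val Ptr beta (s # h) f = disc_val Ptr beta h (\<lambda>h'. f (s # h'))"
  by (simp add: disc_val_def cond_exp_Cons)

lemma disc_val_cong: "(\<And>c. f (h @ c) = f' (h @ c)) \<Longrightarrow> disc_val Ptr beta h f = disc_val Ptr beta h f'"
  by (simp add: disc_val_def cond_exp_def)

locale discounted_chain =
  fixes Ptr :: "'s::finite \<Rightarrow> 's \<Rightarrow> real" and beta :: real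
  assumes Ptr_nonneg: "\<And>s s'. 0 \<le> Ptr s s'"
    and Ptr_sum: "\<And>s. (\<Sum>s'\<in>UNIV. Ptr s s') = 1"
    and beta_nonneg: "0 \<le> beta"
    and beta_less_1: "beta < 1"
begin

lemma cont_prob_nonneg: "0 \<le> cont_prob Ptr s c"
  by (induction c arbitrary: s) (simp_all add: Ptr_nonneg)

lemma sum_Ptr_le: "(\<And>s'. f s' \<le> C) \<Longrightarrow> (\<Sum>s'\<in>UNIV. Ptr s s' * f s') \<le> C"
  using sum_mono[of UNIV "\<lambda>s'. Ptr s s' * f s'" "\<lambda>s'. Ptr s s' * C"]
  by (simp add: mult_left_mono Ptr_nonneg Ptr_sum flip: sum_distrib_right)

lemma cond_exp_const: "cond_exp Ptr h n (\<lambda>_. c) = c"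
  by (induction n arbitrary: h) (simp_all add: cond_exp_Suc Ptr_sum flip: sum_distrib_right)

lemma abs_cond_exp_le:
  assumes "\<And>c. \<bar>f (h @ c)\<bar> \<le> C"
  shows "\<bar>cond_exp Ptr h n f\<bar> \<le> C"
proof -
  have "\<bar>cond_exp Ptr h n f\<bar> \<le> (\<Sum>c | length c = n. cont_prob Ptr (last h) c * \<bar>f (h @ c)\<bar>)"
    unfolding cond_exp_def by (rule order_trans[OF sum_abs]) (simp add: abs_mult cont_prob_nonneg)
  also have "\<dots> \<le> cond_exp Ptr h n (\<lambda>_. C)"
    unfolding cond_exp_def by (intro sum_mono mult_left_mono assms cont_prob_nonneg)
  finally show ?thesis
    by (simp add: cond_exp_const)
qed

lemma disc_term_le:
  assumes "\<And>c. \<bar>f (h @ c)\<bar> \<le> C"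
  shows "norm (beta ^ n * cond_exp Ptr h n f) \<le> C * beta ^ n"
  using abs_cond_exp_le[of f h C, OF assms] beta_nonneg
  by (simp add: abs_mult mult.commute[of "beta ^ n"] mult_right_mono)

lemma summable_geometric_beta: "summable (\<lambda>n. C * beta ^ n)"
  using beta_nonneg beta_less_1 by (intro summable_mult summable_geometric) simp

lemma summable_disc_val:
  assumes "\<And>c. \<bar>f (h @ c)\<bar> \<le> C"
  shows "summable (\<lambda>n. beta ^ n * cond_exp Ptr h n f)"
  using summable_geometric_beta disc_term_le[of f h C, OF assms] by (rule summable_comparison_test')

lemma abs_disc_val_le:
  assumes "\<And>c. \<bar>f (h @ c)\<bar> \<le> C"
  shows "\<bar>disc_val Ptr beta h f\<bar> \<le> C / (1 - beta)"
proof -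
  have "norm (disc_val Ptr beta h f) \<le> (\<Sum>n. C * beta ^ n)"
    unfolding disc_val_def using disc_term_le[of f h C, OF assms] summable_geometric_beta
    by (rule norm_suminf_le)
  also have "\<dots> = C / (1 - beta)"
    using beta_nonneg beta_less_1 by (simp add: suminf_mult suminf_geometric)
  finally show ?thesis
    by simp
qed

lemma disc_val_unfold:
  assumes "\<And>c. \<bar>f (h @ c)\<bar> \<le> C"
  shows "disc_val Ptr beta h f = f h + beta * (\<Sum>s'\<in>UNIV. Ptr (last h) s' * disc_val Ptr beta (h @ [s']) f)"
proof -
  define t where "t = (\<lambda>s' n. beta ^ n * cond_exp Ptr (h @ [s']) n f)"
  have summable_t: "summable (t s')" for s'
    unfolding t_def by (rule summable_disc_val[where C = C]) (simp add: assms)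
  have "disc_val Ptr beta h f = f h + (\<Sum>n. beta ^ Suc n * cond_exp Ptr h (Suc n) f)"
    unfolding disc_val_def using suminf_split_head[OF summable_disc_val[of f h C, OF assms]] by simp
  also have "(\<Sum>n. beta ^ Suc n * cond_exp Ptr h (Suc n) f)
      = (\<Sum>n. \<Sum>s'\<in>UNIV. beta * Ptr (last h) s' * t s' n)"
    by (simp add: t_def cond_exp_Suc sum_distrib_left mult_ac)
  also have "\<dots> = (\<Sum>s'\<in>UNIV. \<Sum>n. beta * Ptr (last h) s' * t s' n)"
    by (rule suminf_sum) (simp add: summable_mult summable_t)
  also have "\<dots> = (\<Sum>s'\<in>UNIV. beta * Ptr (last h) s' * disc_val Ptr beta (h @ [s']) f)"
    unfolding suminf_mult[OF summable_t] by (simp add: disc_val_def t_def)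
  finally show ?thesis
    by (simp add: sum_distrib_left mult_ac)
qed

end

section \<open>Plans and their continuations\<close>

lemma xstate_singleton [simp]: "xstate zeta a x0 [s] = x0"
  by (simp add: xstate_def)

lemma xstate_snoc: "h \<noteq> [] \<Longrightarrow> xstate zeta a x0 (h @ [s]) = zeta (xstate zeta a x0 h) (a h) (last h)"
  by (induction h rule: rev_induct) (simp_all add: xstate_def)

lemma xstate_Cons:
  "h \<noteq> [] \<Longrightarrow> xstate zeta a x0 (s0 # h) = xstate zeta (\<lambda>h'. a (s0 # h')) (zeta x0 (a [s0]) s0) h"
proof (induction h rule: rev_induct)
  case (snoc s h)
  show ?case
  proof (cases "h = []")
    case True
    then show ?thesis by (simp add: xstate_def)
  next
    case False
    with snoc show ?thesis by (simp add: xstate_snoc flip: append_Cons)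
  qed
qed simp

lemma feasible_first_action: "feasible Ptr beta A zeta p g gbar x s a \<Longrightarrow> a [s] \<in> Atil A p x s"
  unfolding feasible_def by (metis list.distinct(1) list.sel(1) xstate_singleton last_ConsL)

lemma gbar_le_plan_val: "feasible Ptr beta A zeta p g gbar x s a \<Longrightarrow> gbar i \<le> plan_val Ptr beta zeta (g i) x s a"
  by (simp add: feasible_def plan_val_def)

lemma feasible_continuation:
  assumes "feasible Ptr beta A zeta p g gbar x0 s0 a"
  shows "feasible Ptr beta A zeta p g gbar (zeta x0 (a [s0]) s0) s' (\<lambda>h. a (s0 # h))"
  unfolding feasible_def
proof (intro conjI allI impI)
  fix h assume h: "h \<noteq> [] \<and> hd h = s'"
  then have "a (s0 # h) \<in> Atil A p (xstate zeta a x0 (s0 # h)) (last (s0 # h))"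
    using assms unfolding feasible_def by (metis list.distinct(1) list.sel(1))
  with h show "a (s0 # h) \<in> Atil A p (xstate zeta (\<lambda>h. a (s0 # h)) (zeta x0 (a [s0]) s0) h) (last h)"
    by (simp add: xstate_Cons)
next
  fix h i assume h: "h \<noteq> [] \<and> hd h = s'"
  have "gbar i \<le> disc_val Ptr beta (s0 # h) (\<lambda>h'. g i (xstate zeta a x0 h') (a h') (last h'))"
    using assms h unfolding feasible_def by (metis list.distinct(1) list.sel(1))
  with h show "gbar i \<le> disc_val Ptr beta h
      (\<lambda>h'. g i (xstate zeta (\<lambda>h. a (s0 # h)) (zeta x0 (a [s0]) s0) h') (a (s0 # h')) (last h'))"
    by (simp add: disc_val_Cons xstate_Cons cong: disc_val_cong)
qed

section \<open>Convexity of inf-sup functions\<close>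

lemma convex_on_SUP_finite:
  assumes "finite S" "S \<noteq> {}" and convex: "\<And>a. a \<in> S \<Longrightarrow> convex_on K (f a)"
  shows "convex_on K (\<lambda>z. SUP a\<in>S. f a z)"
proof -
  have "convex K"
    using assms(2) convex convex_on_imp_convex by blast
  then show ?thesis
    unfolding convex_on_def
  proof (intro conjI ballI allI impI)
    fix x y and u v :: real
    assume xy: "x \<in> K" "y \<in> K" and uv: "0 \<le> u" "0 \<le> v" "u + v = 1"
    show "(SUP a\<in>S. f a (u *\<^sub>R x + v *\<^sub>R y)) \<le> u * (SUP a\<in>S. f a x) + v * (SUP a\<in>S. f a y)"
    proof (rule cSUP_least[OF assms(2)])
      fix a assume a: "a \<in> S"
      have "f a (u *\<^sub>R x + v *\<^sub>R y) \<le> u * f a x + v * f a y"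
        using convex[OF a] xy uv by (simp add: convex_on_def)
      also have "\<dots> \<le> u * (SUP a\<in>S. f a x) + v * (SUP a\<in>S. f a y)"
        using a uv assms(1) by (intro add_mono mult_left_mono cSUP_upper bdd_above_finite) auto
      finally show "f a (u *\<^sub>R x + v *\<^sub>R y) \<le> u * (SUP a\<in>S. f a x) + v * (SUP a\<in>S. f a y)" .
    qed
  qed
qed

lemma convex_on_INF_partial:
  assumes convex: "convex_on (C \<times> D) f" and "D \<noteq> {}"
    and bdd: "\<And>x. x \<in> C \<Longrightarrow> bdd_below ((\<lambda>y. f (x, y)) ` D)"
  shows "convex_on C (\<lambda>x. INF y\<in>D. f (x, y))"
proof -
  have "convex (C \<times> D)"
    using convex convex_on_imp_convex by blast
  then have "convex C"
    using convex_linear_image[OF linear_fst, of "C \<times> D"] \<open>D \<noteq> {}\<close> by simp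
  then show ?thesis
    unfolding convex_on_def
  proof (intro conjI ballI allI impI)
    fix x1 x2 and u v :: real
    assume x: "x1 \<in> C" "x2 \<in> C" and uv: "0 \<le> u" "0 \<le> v" "u + v = 1"
    show "(INF y\<in>D. f (u *\<^sub>R x1 + v *\<^sub>R x2, y)) \<le> u * (INF y\<in>D. f (x1, y)) + v * (INF y\<in>D. f (x2, y))"
    proof (rule field_le_epsilon)
      fix e :: real assume "0 < e"
      obtain y1 where y1: "y1 \<in> D" "f (x1, y1) < (INF y\<in>D. f (x1, y)) + e"
        using cINF_less_iff[OF \<open>D \<noteq> {}\<close> bdd[OF x(1)]] \<open>0 < e\<close> by (metis less_add_same_cancel1)
      obtain y2 where y2: "y2 \<in> D" "f (x2, y2) < (INF y\<in>D. f (x2, y)) + e"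
        using cINF_less_iff[OF \<open>D \<noteq> {}\<close> bdd[OF x(2)]] \<open>0 < e\<close> by (metis less_add_same_cancel1)
      have comb: "(u *\<^sub>R x1 + v *\<^sub>R x2, u *\<^sub>R y1 + v *\<^sub>R y2) = u *\<^sub>R (x1, y1) + v *\<^sub>R (x2, y2)"
        by simp
      have "(u *\<^sub>R x1 + v *\<^sub>R x2, u *\<^sub>R y1 + v *\<^sub>R y2) \<in> C \<times> D"
        unfolding comb using \<open>convex (C \<times> D)\<close> x y1 y2 uv by (intro convexD) auto
      then have "(INF y\<in>D. f (u *\<^sub>R x1 + v *\<^sub>R x2, y)) \<le> f (u *\<^sub>R x1 + v *\<^sub>R x2, u *\<^sub>R y1 + v *\<^sub>R y2)"
        by (intro cINF_lower bdd) auto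
      also have "\<dots> \<le> u * f (x1, y1) + v * f (x2, y2)"
        unfolding comb using convex x y1 y2 uv by (simp add: convex_on_def)
      also have "\<dots> \<le> u * ((INF y\<in>D. f (x1, y)) + e) + v * ((INF y\<in>D. f (x2, y)) + e)"
        using y1 y2 uv by (intro add_mono mult_left_mono) auto
      also have "\<dots> = u * (INF y\<in>D. f (x1, y)) + v * (INF y\<in>D. f (x2, y)) + e"
        using uv by (simp add: algebra_simps flip: distrib_left)
      finally show "(INF y\<in>D. f (u *\<^sub>R x1 + v *\<^sub>R x2, y))
          \<le> u * (INF y\<in>D. f (x1, y)) + v * (INF y\<in>D. f (x2, y)) + e" .
    qed
  qed
qed

lemma convex_on_linear: "linear f \<Longrightarrow> convex S \<Longrightarrow> convex_on S f"
  by (simp add: convex_on_def linear_add linear_scale)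

lemma convex_on_compose_linear:
  assumes "convex_on S f" "linear h" "convex C" "h ` C \<subseteq> S"
  shows "convex_on C (\<lambda>x. f (h x))"
  using assms by (auto simp: convex_on_def linear_add linear_scale image_subset_iff)

lemma convex_on_sum_scaled:
  assumes "finite I" "convex S" "\<And>i. i \<in> I \<Longrightarrow> 0 \<le> w i" "\<And>i. i \<in> I \<Longrightarrow> convex_on S (f i)"
  shows "convex_on S (\<lambda>x. \<Sum>i\<in>I. w i * f i x)"
  using assms by (induction I rule: finite_induct) (auto simp: convex_on_const intro!: convex_on_add convex_on_cmul)

section \<open>Essential suprema and the space M\<close>

lemma summable_Suc_times_power:
  fixes q :: real
  assumes "\<bar>q\<bar> < 1"
  shows "summable (\<lambda>n. real (Suc n) * q ^ n)"
proof -
  \<comment> \<open>termwise derivative of the geometric series\<close>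
  have "summable (\<lambda>n. diffs (\<lambda>_. 1::real) n * q ^ n)"
    using assms by (intro termdiff_converges[of _ 1]) (auto intro!: summable_geometric)
  then show ?thesis
    by (simp add: diffs_def)
qed

lemma Bk_eq_cbox: "Bk k = cbox 0 (\<chi> i. k)"
  by (auto simp: Bk_def mem_box_cart)

lemma Bk_subset_nonneg: "Bk k \<subseteq> nonneg"
  by (auto simp: Bk_def nonneg_def)

lemma sets_lebesgue_Bk: "Bk k \<in> sets lebesgue"
  unfolding Bk_eq_cbox by (rule fmeasurableD) (rule lmeasurable_cbox)

lemma emeasure_Bk_neq_0:
  assumes "0 < k"
  shows "emeasure lebesgue (Bk k :: (real^'i) set) \<noteq> 0"
proof -
  have "emeasure lebesgue (Bk k :: (real^'i) set) = (\<Prod>b\<in>Basis. ((\<chi> i. k) - 0 :: real^'i) \<bullet> b)"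
    unfolding Bk_eq_cbox using assms
    by (simp add: emeasure_lborel_cbox_eq Basis_vec_def inner_axis less_imp_le)
  moreover have "0 < (\<Prod>b\<in>Basis. ((\<chi> i. k) - 0 :: real^'i) \<bullet> b)"
    using assms by (intro prod_pos) (auto simp: Basis_vec_def inner_axis)
  ultimately show ?thesis
    by (metis ennreal_eq_0_iff not_le)
qed

lemma Linf_norm_nonneg:
  assumes "K \<in> sets lebesgue" "emeasure lebesgue K \<noteq> 0"
  shows "0 \<le> Linf_norm K f"
proof -
  have "esssup (restrict_space lebesgue K) (\<lambda>_. 0) = (0::ereal)"
    using assms by (intro esssup_const) (simp add: emeasure_restrict_space del: emeasure_completion)
  then show ?thesis
    unfolding Linf_norm_def by (metis esssup_mono[of "\<lambda>_. 0"] abs_ge_zero ereal_less_eq(5) borel_measurable_const)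
qed

lemma Linf_norm_le:
  assumes "K \<in> sets lebesgue" "continuous_on K f" "\<And>x. x \<in> K \<Longrightarrow> \<bar>f x\<bar> \<le> C"
  shows "Linf_norm K f \<le> ereal C"
  unfolding Linf_norm_def
proof (rule esssup_I)
  show "(\<lambda>x. ereal \<bar>f x\<bar>) \<in> borel_measurable (restrict_space lebesgue K)"
    using assms by (intro borel_measurable_ereal borel_measurable_abs continuous_imp_measurable_on_sets_lebesgue)
  show "AE x in restrict_space lebesgue K. ereal \<bar>f x\<bar> \<le> ereal C"
    using assms(3) by (intro AE_I2) (simp add: space_restrict_space)
qed

lemma summable_half_power_affine: "summable (\<lambda>k. (1/2::real) ^ Suc k * (a + b * real (Suc k)))"
proof -
  have eq: "(\<lambda>k. (1/2::real) ^ Suc k * (a + b * real (Suc k)))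
      = (\<lambda>k. a / 2 * (1/2) ^ k + b / 2 * (real (Suc k) * (1/2) ^ k))"
    by (simp add: fun_eq_iff field_simps)
  show ?thesis
    unfolding eq by (intro summable_add summable_mult summable_geometric summable_Suc_times_power) simp_all
qed

lemma suminf_ereal_le_summable:
  fixes f :: "nat \<Rightarrow> ereal"
  assumes "\<And>n. 0 \<le> f n" "\<And>n. f n \<le> ereal (b n)" "summable b"
  shows "0 \<le> suminf f \<and> suminf f \<le> ereal (suminf b)"
proof
  show "0 \<le> suminf f"
    using assms(1) by (intro suminf_nonneg summable_ereal_pos) auto
  have "suminf f \<le> (\<Sum>n. ereal (b n))"
    using assms(1,2) by (intro suminf_le_pos)
  then show "suminf f \<le> ereal (suminf b)"
    by (simp add: suminf_ereal'[OF assms(3)])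
qed

lemma Linf_norm_Bk_le:
  fixes f :: "real^'i \<Rightarrow> real"
  assumes "0 < k" "0 \<le> c" and cont: "continuous_on nonneg f"
    and growth: "\<And>\<gamma>. \<gamma> \<in> nonneg \<Longrightarrow> \<bar>f \<gamma>\<bar> \<le> c * (1 + (\<Sum>i\<in>UNIV. \<gamma> $ i))"
  shows "0 \<le> Linf_norm (Bk k) f \<and> Linf_norm (Bk k) f \<le> ereal (c + c * real CARD('i) * k)"
proof
  show "0 \<le> Linf_norm (Bk k) f"
    using assms(1) by (intro Linf_norm_nonneg sets_lebesgue_Bk emeasure_Bk_neq_0)
  have "\<bar>f \<gamma>\<bar> \<le> c + c * real CARD('i) * k" if "\<gamma> \<in> Bk k" for \<gamma>
  proof -
    have "(\<Sum>i\<in>UNIV. \<gamma> $ i) \<le> real CARD('i) * k"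
      using sum_mono[of UNIV "\<lambda>i. \<gamma> $ i" "\<lambda>_. k"] that by (simp add: Bk_def)
    then have "c * (\<Sum>i\<in>UNIV. \<gamma> $ i) \<le> c * (real CARD('i) * k)"
      using \<open>0 \<le> c\<close> by (rule mult_left_mono)
    moreover have "\<gamma> \<in> nonneg"
      using that Bk_subset_nonneg by blast
    ultimately show ?thesis
      using growth[of \<gamma>] by (simp add: algebra_simps)
  qed
  then show "Linf_norm (Bk k) f \<le> ereal (c + c * real CARD('i) * k)"
    using continuous_on_subset[OF cont Bk_subset_nonneg] by (intro Linf_norm_le sets_lebesgue_Bk) auto
qed

lemma weighted_Linf_norms_Bk_le:
  fixes f :: "real^'i \<Rightarrow> real"
  assumes "0 \<le> c" and cont: "continuous_on nonneg f"
    and growth: "\<And>\<gamma>. \<gamma> \<in> nonneg \<Longrightarrow> \<bar>f \<gamma>\<bar> \<le> c * (1 + (\<Sum>i\<in>UNIV. \<gamma> $ i))"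
  shows "0 \<le> (\<Sum>k. ereal ((1/2) ^ Suc k) * Linf_norm (Bk (real (Suc k))) f)
    \<and> (\<Sum>k. ereal ((1/2) ^ Suc k) * Linf_norm (Bk (real (Suc k))) f)
      \<le> ereal (\<Sum>k. (1/2) ^ Suc k * (c + c * real CARD('i) * real (Suc k)))"
proof (rule suminf_ereal_le_summable[OF _ _ summable_half_power_affine])
  fix k
  have norm: "0 \<le> Linf_norm (Bk (real (Suc k))) f"
    "Linf_norm (Bk (real (Suc k))) f \<le> ereal (c + c * real CARD('i) * real (Suc k))"
    using Linf_norm_Bk_le[of "real (Suc k)", OF _ assms] by auto
  then show "0 \<le> ereal ((1/2) ^ Suc k) * Linf_norm (Bk (real (Suc k))) f"
    by (simp add: ereal_0_le_mult)
  from norm(2) have "ereal ((1/2) ^ Suc k) * Linf_norm (Bk (real (Suc k))) f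
      \<le> ereal ((1/2) ^ Suc k) * ereal (c + c * real CARD('i) * real (Suc k))"
    by (rule ereal_mult_left_mono) simp
  then show "ereal ((1/2) ^ Suc k) * Linf_norm (Bk (real (Suc k))) f
      \<le> ereal ((1/2) ^ Suc k * (c + c * real CARD('i) * real (Suc k)))"
    by simp
qed

lemma M_norm_less_infinity:
  fixes F :: "real^'i \<Rightarrow> 'x \<Rightarrow> 's::finite \<Rightarrow> real"
  assumes xe: "xe ` enum_index X \<subseteq> X" and "0 \<le> D"
    and bound: "\<And>x s. x \<in> X \<Longrightarrow>
      0 \<le> (\<Sum>k. ereal ((1/2) ^ Suc k) * Linf_norm (Bk (real (Suc k))) (\<lambda>\<gamma>. F \<gamma> x s))
      \<and> (\<Sum>k. ereal ((1/2) ^ Suc k) * Linf_norm (Bk (real (Suc k))) (\<lambda>\<gamma>. F \<gamma> x s)) \<le> ereal D"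
  shows "M_norm se xe X F < \<infinity>"
proof -
  define U where "U x s = (\<Sum>k. ereal ((1/2) ^ Suc k) * Linf_norm (Bk (real (Suc k))) (\<lambda>\<gamma>. F \<gamma> x s))"
    for x s
  have "(\<Sum>j. (if j \<in> enum_index X then ereal ((1/2) ^ j) else 0) * U (xe j) s)
      \<le> ereal (\<Sum>j. (1/2) ^ j * D)" for s
  proof (rule suminf_ereal_le_summable[THEN conjunct2])
    fix j
    show "0 \<le> (if j \<in> enum_index X then ereal ((1/2) ^ j) else 0) * U (xe j) s"
      using bound xe by (auto simp: U_def ereal_0_le_mult)
    show "(if j \<in> enum_index X then ereal ((1/2) ^ j) else 0) * U (xe j) s \<le> ereal ((1/2) ^ j * D)"
    proof (cases "j \<in> enum_index X")
      case True
      then have "U (xe j) s \<le> ereal D"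
        using bound xe by (auto simp: U_def)
      then show ?thesis
        using True ereal_mult_left_mono[of "U (xe j) s" "ereal D" "ereal ((1/2) ^ j)"] by simp
    qed (simp add: \<open>0 \<le> D\<close>)
  qed (intro summable_mult2 summable_geometric, simp)
  then have "M_norm se xe X F \<le> (\<Sum>i\<in>{1..CARD('s)}. ereal ((1/2) ^ i) * ereal (\<Sum>j. (1/2) ^ j * D))"
    unfolding M_norm_def U_def[symmetric] by (intro sum_mono ereal_mult_left_mono) auto
  then show ?thesis
    by (rule le_less_trans) (simp add: sum_ereal)
qed

lemma Mspace_if_continuous_linear_growth:
  fixes F :: "real^'i \<Rightarrow> 'x \<Rightarrow> 's::finite \<Rightarrow> real"
  assumes xe: "xe ` enum_index X \<subseteq> X" and "0 \<le> c"
    and cont: "\<And>x s. x \<in> X \<Longrightarrow> continuous_on nonneg (\<lambda>\<gamma>. F \<gamma> x s)"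
    and growth: "\<And>x s \<gamma>. x \<in> X \<Longrightarrow> \<gamma> \<in> nonneg \<Longrightarrow> \<bar>F \<gamma> x s\<bar> \<le> c * (1 + (\<Sum>i\<in>UNIV. \<gamma> $ i))"
  shows "F \<in> Mspace se xe X"
proof -
  define D where "D = (\<Sum>k. (1/2::real) ^ Suc k * (c + c * real CARD('i) * real (Suc k)))"
  have "0 \<le> D"
    unfolding D_def using \<open>0 \<le> c\<close> by (intro suminf_nonneg summable_half_power_affine) simp
  then have "M_norm se xe X F < \<infinity>"
    using weighted_Linf_norms_Bk_le[OF \<open>0 \<le> c\<close> cont growth] unfolding D_def
    by (intro M_norm_less_infinity[OF xe]) auto
  moreover have "Linf_norm (Bk (real k)) (\<lambda>\<gamma>. F \<gamma> x s) < \<infinity>" if "x \<in> X" "1 \<le> k" for x s k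
  proof -
    have "Linf_norm (Bk (real k)) (\<lambda>\<gamma>. F \<gamma> x s) \<le> ereal (c + c * real CARD('i) * real k)"
      using Linf_norm_Bk_le[OF _ \<open>0 \<le> c\<close> cont growth] that by simp
    then show ?thesis
      by (rule le_less_trans) simp
  qed
  ultimately show ?thesis
    by (simp add: Mspace_def)
qed

lemma l1_lipschitz_imp_continuous_on:
  fixes f :: "real^'n \<Rightarrow> real"
  assumes "0 \<le> C" and lip: "\<And>x y. x \<in> S \<Longrightarrow> y \<in> S \<Longrightarrow> \<bar>f x - f y\<bar> \<le> C * (\<Sum>i\<in>UNIV. \<bar>x $ i - y $ i\<bar>)"
  shows "continuous_on S f"
proof (rule lipschitz_on_continuous_on)
  show "(C * real CARD('n))-lipschitz_on S f"
  proof (rule lipschitz_onI)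
    fix x y assume "x \<in> S" "y \<in> S"
    have "(\<Sum>i\<in>UNIV. \<bar>x $ i - y $ i\<bar>) \<le> (\<Sum>i\<in>(UNIV::'n set). dist x y)"
      by (intro sum_mono) (metis component_le_norm_cart dist_norm vector_minus_component)
    then have "C * (\<Sum>i\<in>UNIV. \<bar>x $ i - y $ i\<bar>) \<le> C * real CARD('n) * dist x y"
      using \<open>0 \<le> C\<close> by (simp add: mult_left_mono mult.assoc)
    then show "dist (f x) (f y) \<le> C * real CARD('n) * dist x y"
      using lip[OF \<open>x \<in> S\<close> \<open>y \<in> S\<close>] by (simp add: dist_real_def)
  qed (use \<open>0 \<le> C\<close> in simp)
qed

section \<open>The Bellman operator\<close>

lemma abs_le_supnorm:
  assumes "\<exists>C. \<forall>x\<in>X. \<forall>a\<in>A. \<forall>s. \<bar>f x a s\<bar> \<le> C" "x \<in> X" "a \<in> A"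
  shows "\<bar>f x a s\<bar> \<le> supnorm X A f"
proof -
  obtain C where "\<forall>x\<in>X. \<forall>a\<in>A. \<forall>s. \<bar>f x a s\<bar> \<le> C"
    using assms(1) by blast
  then have "bdd_above ((\<lambda>z. \<bar>f (fst z) (fst (snd z)) (snd (snd z))\<bar>) ` (X \<times> A \<times> UNIV))"
    by (intro bdd_aboveI2[where M = C]) auto
  from cSUP_upper[OF _ this, of "(x, a, s)"] assms(2,3) show ?thesis
    by (simp add: supnorm_def)
qed

lemma convex_nonneg: "convex nonneg"
  by (simp add: convex_def nonneg_def)

lemma nonneg_add: "\<gamma> \<in> nonneg \<Longrightarrow> \<mu> \<in> nonneg \<Longrightarrow> \<gamma> + \<mu> \<in> nonneg"
  by (simp add: nonneg_def)

lemma zero_in_nonneg: "0 \<in> nonneg"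
  by (simp add: nonneg_def)

lemma sum_component_nonneg: "\<gamma> \<in> nonneg \<Longrightarrow> 0 \<le> (\<Sum>i\<in>UNIV. \<gamma> $ i)"
  by (simp add: nonneg_def sum_nonneg)

locale constrained_dp = discounted_chain Ptr beta
  for Ptr :: "'s::finite \<Rightarrow> 's \<Rightarrow> real" and beta +
  fixes A :: "'a set" and X :: "'x set" and zeta :: "'x \<Rightarrow> 'a \<Rightarrow> 's \<Rightarrow> 'x"
    and p r :: "'x \<Rightarrow> 'a \<Rightarrow> 's \<Rightarrow> real" and g :: "'i::finite \<Rightarrow> 'x \<Rightarrow> 'a \<Rightarrow> 's \<Rightarrow> real"
    and gbar :: "'i \<Rightarrow> real"
  assumes finite_A: "finite A"
    and zeta_in_X: "\<And>x a s. x \<in> X \<Longrightarrow> a \<in> A \<Longrightarrow> zeta x a s \<in> X"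
    and r_bounded: "\<exists>C. \<forall>x\<in>X. \<forall>a\<in>A. \<forall>s. \<bar>r x a s\<bar> \<le> C"
    and g_bounded: "\<And>i. \<exists>C. \<forall>x\<in>X. \<forall>a\<in>A. \<forall>s. \<bar>g i x a s\<bar> \<le> C"
    and feasible_exists: "\<And>x s. x \<in> X \<Longrightarrow> \<exists>a. feasible Ptr beta A zeta p g gbar x s a"
begin

abbreviation "feasible_plan \<equiv> feasible Ptr beta A zeta p g gbar"
abbreviation "L \<equiv> Lconst beta X A r g"
abbreviation "N se xe \<equiv> Nspace se xe X Ptr beta A zeta p r g gbar"
abbreviation "B \<equiv> Bellman Ptr beta A zeta p r g gbar"

definition weighted_value :: "real^'i \<Rightarrow> 'x \<Rightarrow> 's \<Rightarrow> ('s list \<Rightarrow> 'a) \<Rightarrow> real" where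
  "weighted_value \<gamma> x s a =
     plan_val Ptr beta zeta r x s a + (\<Sum>i\<in>UNIV. \<gamma> $ i * plan_val Ptr beta zeta (g i) x s a)"

definition objective :: "(real^'i \<Rightarrow> 'x \<Rightarrow> 's \<Rightarrow> real) \<Rightarrow> real^'i \<Rightarrow> real^'i \<Rightarrow> 'x \<Rightarrow> 's \<Rightarrow> 'a \<Rightarrow> real"
  where "objective F \<gamma> \<mu> x s a =
     r x a s + (\<Sum>i\<in>UNIV. \<gamma> $ i * g i x a s + \<mu> $ i * (g i x a s - gbar i))
     + beta * (\<Sum>s'\<in>UNIV. Ptr s s' * F (\<gamma> + \<mu>) (zeta x a s) s')"

lemma Bellman_eq: "B F \<gamma> x s = (INF \<mu>\<in>nonneg. SUP a\<in>Atil A p x s. objective F \<gamma> \<mu> x s a)"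
  by (simp add: Bellman_def objective_def)

lemma Nspace_convex: "F \<in> N se xe \<Longrightarrow> x \<in> X \<Longrightarrow> convex_on nonneg (\<lambda>\<gamma>. F \<gamma> x s)"
  by (simp add: Nspace_def)

lemma Nspace_lipschitz: "F \<in> N se xe \<Longrightarrow> x \<in> X \<Longrightarrow> \<gamma>1 \<in> nonneg \<Longrightarrow> \<gamma>2 \<in> nonneg \<Longrightarrow>
    \<bar>F \<gamma>1 x s - F \<gamma>2 x s\<bar> \<le> L * (\<Sum>i\<in>UNIV. \<bar>\<gamma>1 $ i - \<gamma>2 $ i\<bar>)"
  by (simp add: Nspace_def)

lemma Nspace_lower: "F \<in> N se xe \<Longrightarrow> x \<in> X \<Longrightarrow> \<gamma> \<in> nonneg \<Longrightarrow> feasible_plan x s a \<Longrightarrow>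
    weighted_value \<gamma> x s a \<le> F \<gamma> x s"
  by (simp add: Nspace_def weighted_value_def)

lemma Nspace_upper: "F \<in> N se xe \<Longrightarrow> x \<in> X \<Longrightarrow> \<gamma> \<in> nonneg \<Longrightarrow>
    F \<gamma> x s \<le> (1 + (\<Sum>i\<in>UNIV. \<gamma> $ i)) * L"
  by (simp add: Nspace_def)

lemma abs_r_le: "x \<in> X \<Longrightarrow> a \<in> A \<Longrightarrow> \<bar>r x a s\<bar> \<le> supnorm X A r"
  by (rule abs_le_supnorm[OF r_bounded])

lemma abs_g_le: "x \<in> X \<Longrightarrow> a \<in> A \<Longrightarrow> \<bar>g i x a s\<bar> \<le> supnorm X A (g i)"
  by (rule abs_le_supnorm[OF g_bounded])

lemma abs_g_le_sum:
  assumes "x \<in> X" "a \<in> A"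
  shows "\<bar>g i x a s\<bar> \<le> (\<Sum>j\<in>UNIV. supnorm X A (g j))"
proof -
  have "0 \<le> supnorm X A (g j)" for j
    using abs_g_le[OF assms, of j s] by linarith
  then have "supnorm X A (g i) \<le> (\<Sum>j\<in>UNIV. supnorm X A (g j))"
    by (intro member_le_sum) auto
  then show ?thesis
    using abs_g_le[OF assms, of i s] by linarith
qed

lemma Lconst_eq: "(1 - beta) * L = supnorm X A r + (\<Sum>i\<in>UNIV. supnorm X A (g i))"
  using beta_less_1 by (simp add: Lconst_def)

lemma finite_Atil: "finite (Atil A p x s)"
  using finite_A by (simp add: Atil_def)

lemma Atil_subset: "Atil A p x s \<subseteq> A"
  by (auto simp: Atil_def)

lemma Atil_nonempty:
  assumes "x \<in> X"
  shows "Atil A p x s \<noteq> {}"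
proof -
  obtain a where "feasible_plan x s a"
    using feasible_exists[OF assms] by blast
  from feasible_first_action[OF this] show ?thesis
    by blast
qed

lemma supnorm_nonneg:
  assumes "x \<in> X"
  shows "0 \<le> supnorm X A r" "0 \<le> (\<Sum>i\<in>UNIV. supnorm X A (g i))"
proof -
  obtain a where a: "a \<in> A"
    using Atil_nonempty[OF assms] Atil_subset by blast
  show "0 \<le> supnorm X A r"
    using abs_r_le[OF assms a, of undefined] abs_ge_zero[of "r x a undefined"] by linarith
  show "0 \<le> (\<Sum>i\<in>UNIV. supnorm X A (g i))"
    using abs_g_le_sum[OF assms a, of undefined undefined] abs_ge_zero[of "g undefined x a undefined"]
    by linarith
qed

lemma Lconst_nonneg: "x \<in> X \<Longrightarrow> 0 \<le> L"
  using supnorm_nonneg beta_less_1 by (simp add: Lconst_def)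

lemma payoffs_le_Lconst:
  assumes "x \<in> X" "a \<in> A"
  shows "\<bar>r x a s\<bar> \<le> (1 - beta) * L" "\<bar>g i x a s\<bar> \<le> (1 - beta) * L"
  unfolding Lconst_eq using abs_r_le[OF assms, of s] abs_g_le_sum[OF assms, of i s] supnorm_nonneg[OF assms(1)]
  by linarith+

lemma feasible_path_in:
  assumes "feasible_plan x0 s0 a" "x0 \<in> X"
  shows "h \<noteq> [] \<Longrightarrow> hd h = s0 \<Longrightarrow> xstate zeta a x0 h \<in> X \<and> a h \<in> A"
proof (induction h rule: rev_induct)
  case (snoc s h)
  have "a (h @ [s]) \<in> A"
    using assms(1) snoc.prems unfolding feasible_def Atil_def by auto
  with snoc assms(2) show ?case
    by (cases "h = []") (auto simp: xstate_snoc zeta_in_X)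
qed simp

lemma abs_plan_val_le:
  assumes "feasible_plan x s a" "x \<in> X" and f: "\<And>x a s. x \<in> X \<Longrightarrow> a \<in> A \<Longrightarrow> \<bar>f x a s\<bar> \<le> C"
  shows "\<bar>plan_val Ptr beta zeta f x s a\<bar> \<le> C / (1 - beta)"
  unfolding plan_val_def by (rule abs_disc_val_le) (simp add: f feasible_path_in[OF assms(1,2)])

lemma plan_val_unfold:
  assumes "feasible_plan x s a" "x \<in> X" and f: "\<And>x a s. x \<in> X \<Longrightarrow> a \<in> A \<Longrightarrow> \<bar>f x a s\<bar> \<le> C"
  shows "plan_val Ptr beta zeta f x s a = f x (a [s]) s
    + beta * (\<Sum>s'\<in>UNIV. Ptr s s' * plan_val Ptr beta zeta f (zeta x (a [s]) s) s' (\<lambda>h. a (s # h)))"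
proof -
  have "plan_val Ptr beta zeta f x s a = f x (a [s]) s + beta * (\<Sum>s'\<in>UNIV. Ptr s s'
      * disc_val Ptr beta [s, s'] (\<lambda>h. f (xstate zeta a x h) (a h) (last h)))"
    unfolding plan_val_def
    by (subst disc_val_unfold[where C = C]) (simp_all add: f feasible_path_in[OF assms(1,2)])
  moreover have "disc_val Ptr beta [s, s'] (\<lambda>h. f (xstate zeta a x h) (a h) (last h))
      = plan_val Ptr beta zeta f (zeta x (a [s]) s) s' (\<lambda>h. a (s # h))" for s'
    unfolding plan_val_def by (simp add: disc_val_Cons) (rule disc_val_cong, simp add: xstate_Cons)
  ultimately show ?thesis
    by simp
qed

lemma weighted_value_unfold:
  assumes a: "feasible_plan x s a" and x: "x \<in> X"
  shows "weighted_value \<gamma> x s a + (\<Sum>i\<in>UNIV. \<mu> $ i * (plan_val Ptr beta zeta (g i) x s a - gbar i))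
    = r x (a [s]) s + (\<Sum>i\<in>UNIV. \<gamma> $ i * g i x (a [s]) s + \<mu> $ i * (g i x (a [s]) s - gbar i))
      + beta * (\<Sum>s'\<in>UNIV. Ptr s s' * weighted_value (\<gamma> + \<mu>) (zeta x (a [s]) s) s' (\<lambda>h. a (s # h)))"
proof -
  define y where "y = zeta x (a [s]) s"
  define a' where "a' = (\<lambda>h. a (s # h))"
  define v0 where "v0 s' = plan_val Ptr beta zeta r y s' a'" for s'
  define v where "v i s' = plan_val Ptr beta zeta (g i) y s' a'" for i s'
  have r_unfold: "plan_val Ptr beta zeta r x s a = r x (a [s]) s + beta * (\<Sum>s'\<in>UNIV. Ptr s s' * v0 s')"
    unfolding v0_def y_def a'_def by (rule plan_val_unfold[OF a x abs_r_le])
  have g_unfold: "plan_val Ptr beta zeta (g i) x s a = g i x (a [s]) s + beta * (\<Sum>s'\<in>UNIV. Ptr s s' * v i s')"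
    for i unfolding v_def y_def a'_def by (rule plan_val_unfold[OF a x abs_g_le])
  have swap: "(\<Sum>i\<in>UNIV. (\<gamma> + \<mu>) $ i * (\<Sum>s'\<in>UNIV. Ptr s s' * v i s'))
      = (\<Sum>s'\<in>UNIV. \<Sum>i\<in>UNIV. Ptr s s' * ((\<gamma> + \<mu>) $ i * v i s'))"
    by (subst sum.swap) (simp add: sum_distrib_left mult.left_commute)
  have "weighted_value \<gamma> x s a + (\<Sum>i\<in>UNIV. \<mu> $ i * (plan_val Ptr beta zeta (g i) x s a - gbar i))
      = plan_val Ptr beta zeta r x s a + (\<Sum>i\<in>UNIV. \<gamma> $ i * plan_val Ptr beta zeta (g i) x s a
        + \<mu> $ i * (plan_val Ptr beta zeta (g i) x s a - gbar i))"
    by (simp add: weighted_value_def sum.distrib add.assoc)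
  also have "\<dots> = r x (a [s]) s + beta * (\<Sum>s'\<in>UNIV. Ptr s s' * v0 s')
      + (\<Sum>i\<in>UNIV. (\<gamma> $ i * g i x (a [s]) s + \<mu> $ i * (g i x (a [s]) s - gbar i))
        + beta * ((\<gamma> + \<mu>) $ i * (\<Sum>s'\<in>UNIV. Ptr s s' * v i s')))"
    by (simp add: r_unfold g_unfold algebra_simps)
  also have "\<dots> = r x (a [s]) s + (\<Sum>i\<in>UNIV. \<gamma> $ i * g i x (a [s]) s + \<mu> $ i * (g i x (a [s]) s - gbar i))
      + beta * ((\<Sum>s'\<in>UNIV. Ptr s s' * v0 s') + (\<Sum>i\<in>UNIV. (\<gamma> + \<mu>) $ i * (\<Sum>s'\<in>UNIV. Ptr s s' * v i s')))"
    by (simp add: sum.distrib sum_distrib_left distrib_left)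
  also have "\<dots> = r x (a [s]) s + (\<Sum>i\<in>UNIV. \<gamma> $ i * g i x (a [s]) s + \<mu> $ i * (g i x (a [s]) s - gbar i))
      + beta * (\<Sum>s'\<in>UNIV. Ptr s s' * weighted_value (\<gamma> + \<mu>) y s' a')"
    unfolding swap by (simp add: weighted_value_def v0_def v_def distrib_left sum.distrib sum_distrib_left)
  finally show ?thesis
    by (simp only: y_def a'_def)
qed

lemma weighted_value_le_objective:
  assumes F: "F \<in> N se xe" and x: "x \<in> X" and \<gamma>: "\<gamma> \<in> nonneg" and \<mu>: "\<mu> \<in> nonneg"
    and a: "feasible_plan x s a"
  shows "weighted_value \<gamma> x s a \<le> objective F \<gamma> \<mu> x s (a [s])"
proof -
  have y: "zeta x (a [s]) s \<in> X"
    using feasible_first_action[OF a] Atil_subset x zeta_in_X by blast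
  \<comment> \<open>complementary slackness: the plan meets the constraints, so the multiplier term is nonnegative\<close>
  have "0 \<le> (\<Sum>i\<in>UNIV. \<mu> $ i * (plan_val Ptr beta zeta (g i) x s a - gbar i))"
    using \<mu> gbar_le_plan_val[OF a] by (intro sum_nonneg mult_nonneg_nonneg) (simp_all add: nonneg_def)
  then have "weighted_value \<gamma> x s a
      \<le> weighted_value \<gamma> x s a + (\<Sum>i\<in>UNIV. \<mu> $ i * (plan_val Ptr beta zeta (g i) x s a - gbar i))"
    by simp
  also have "\<dots> \<le> objective F \<gamma> \<mu> x s (a [s])"
    unfolding weighted_value_unfold[OF a x] objective_def
    using Nspace_lower[OF F y nonneg_add[OF \<gamma> \<mu>] feasible_continuation[OF a]] Ptr_nonneg beta_nonneg
    by (intro add_left_mono mult_left_mono sum_mono) auto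
  finally show ?thesis .
qed

lemma objective_le_SUP:
  "a \<in> Atil A p x s \<Longrightarrow> objective F \<gamma> \<mu> x s a \<le> (SUP b\<in>Atil A p x s. objective F \<gamma> \<mu> x s b)"
  by (rule cSUP_upper) (simp_all add: finite_Atil)

lemma weighted_value_le_SUP_objective:
  assumes "F \<in> N se xe" "x \<in> X" "\<gamma> \<in> nonneg" "\<mu> \<in> nonneg" "feasible_plan x s a"
  shows "weighted_value \<gamma> x s a \<le> (SUP b\<in>Atil A p x s. objective F \<gamma> \<mu> x s b)"
  using weighted_value_le_objective[OF assms] objective_le_SUP[OF feasible_first_action[OF assms(5)]]
  by (rule order_trans)

lemma bdd_below_SUP_objective:
  assumes "F \<in> N se xe" "x \<in> X" "\<gamma> \<in> nonneg"
  shows "bdd_below ((\<lambda>\<mu>. SUP a\<in>Atil A p x s. objective F \<gamma> \<mu> x s a) ` nonneg)"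
proof -
  obtain a where "feasible_plan x s a"
    using feasible_exists[OF assms(2)] by blast
  then show ?thesis
    using weighted_value_le_SUP_objective[OF assms] by (intro bdd_belowI2)
qed

lemma weighted_value_le_Bellman:
  assumes "F \<in> N se xe" "x \<in> X" "\<gamma> \<in> nonneg" "feasible_plan x s a"
  shows "weighted_value \<gamma> x s a \<le> B F \<gamma> x s"
  unfolding Bellman_eq using zero_in_nonneg
  by (intro cINF_greatest weighted_value_le_SUP_objective[OF assms(1-3) _ assms(4)]) auto

lemma Bellman_le_SUP_objective:
  assumes "F \<in> N se xe" "x \<in> X" "\<gamma> \<in> nonneg" "\<mu> \<in> nonneg"
  shows "B F \<gamma> x s \<le> (SUP a\<in>Atil A p x s. objective F \<gamma> \<mu> x s a)"
  unfolding Bellman_eq by (rule cINF_lower[OF bdd_below_SUP_objective[OF assms(1-3)] assms(4)])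

lemma weighted_value_lower:
  assumes "feasible_plan x s a" "x \<in> X" "\<gamma> \<in> nonneg"
  shows "- ((1 + (\<Sum>i\<in>UNIV. \<gamma> $ i)) * L) \<le> weighted_value \<gamma> x s a"
proof -
  have r: "\<bar>plan_val Ptr beta zeta r x s a\<bar> \<le> L"
    and g: "\<bar>plan_val Ptr beta zeta (g i) x s a\<bar> \<le> L" for i
    using abs_plan_val_le[OF assms(1,2) payoffs_le_Lconst(1)] abs_plan_val_le[OF assms(1,2) payoffs_le_Lconst(2)]
      beta_less_1 by simp_all
  have "\<gamma> $ i * - L \<le> \<gamma> $ i * plan_val Ptr beta zeta (g i) x s a" for i
    using assms(3) g[of i] by (intro mult_left_mono) (simp_all add: nonneg_def abs_le_iff)
  moreover have "- L \<le> plan_val Ptr beta zeta r x s a"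
    using r by (simp add: abs_le_iff)
  ultimately have "- L + (\<Sum>i\<in>UNIV. \<gamma> $ i * - L) \<le> weighted_value \<gamma> x s a"
    unfolding weighted_value_def by (intro add_mono sum_mono)
  then show ?thesis
    by (simp add: algebra_simps sum_distrib_right sum_negf)
qed

lemma objective_zero_le:
  assumes F: "F \<in> N se xe" and x: "x \<in> X" and a: "a \<in> A" and \<gamma>: "\<gamma> \<in> nonneg"
  shows "objective F \<gamma> 0 x s a \<le> (1 + (\<Sum>i\<in>UNIV. \<gamma> $ i)) * L"
proof -
  define S where "S = (\<Sum>i\<in>UNIV. \<gamma> $ i)"
  define G where "G = (\<Sum>i\<in>UNIV. supnorm X A (g i))"
  have nonneg: "0 \<le> S" "0 \<le> supnorm X A r" "0 \<le> G"
    using sum_component_nonneg[OF \<gamma>] supnorm_nonneg[OF x] by (simp_all add: S_def G_def)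
  have r: "r x a s \<le> supnorm X A r"
    using abs_r_le[OF x a, of s] by simp
  have "(\<Sum>i\<in>UNIV. \<gamma> $ i * g i x a s) \<le> (\<Sum>i\<in>UNIV. \<gamma> $ i * G)"
    using abs_g_le_sum[OF x a] \<gamma> unfolding G_def nonneg_def
    by (intro sum_mono mult_left_mono) (auto simp: abs_le_iff)
  then have multipliers: "(\<Sum>i\<in>UNIV. \<gamma> $ i * g i x a s) \<le> S * G"
    by (simp add: S_def sum_distrib_right)
  have "(\<Sum>s'\<in>UNIV. Ptr s s' * F \<gamma> (zeta x a s) s') \<le> (1 + S) * L"
    using Nspace_upper[OF F zeta_in_X[OF x a] \<gamma>] unfolding S_def by (rule sum_Ptr_le)
  then have continuation: "beta * (\<Sum>s'\<in>UNIV. Ptr s s' * F \<gamma> (zeta x a s) s') \<le> beta * ((1 + S) * L)"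
    using beta_nonneg by (rule mult_left_mono)
  have "supnorm X A r + S * G \<le> (1 + S) * (supnorm X A r + G)"
    using nonneg by (simp add: algebra_simps)
  also have "\<dots> = (1 + S) * ((1 - beta) * L)"
    unfolding Lconst_eq G_def ..
  finally have "supnorm X A r + S * G + beta * ((1 + S) * L) \<le> (1 + S) * L"
    by (simp add: algebra_simps)
  then show ?thesis
    unfolding objective_def S_def[symmetric] using r multipliers continuation by simp
qed

lemma Bellman_upper:
  assumes F: "F \<in> N se xe" and x: "x \<in> X" and \<gamma>: "\<gamma> \<in> nonneg"
  shows "B F \<gamma> x s \<le> (1 + (\<Sum>i\<in>UNIV. \<gamma> $ i)) * L"
proof -
  have "(SUP a\<in>Atil A p x s. objective F \<gamma> 0 x s a) \<le> (1 + (\<Sum>i\<in>UNIV. \<gamma> $ i)) * L"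
    using objective_zero_le[OF F x _ \<gamma>] Atil_subset by (intro cSUP_least Atil_nonempty x) blast
  then show ?thesis
    by (rule order_trans[OF Bellman_le_SUP_objective[OF F x \<gamma> zero_in_nonneg]])
qed

lemma abs_Bellman_le:
  assumes "F \<in> N se xe" "x \<in> X" "\<gamma> \<in> nonneg"
  shows "\<bar>B F \<gamma> x s\<bar> \<le> (1 + (\<Sum>i\<in>UNIV. \<gamma> $ i)) * L"
proof -
  obtain a where a: "feasible_plan x s a"
    using feasible_exists[OF assms(2)] by blast
  have "- ((1 + (\<Sum>i\<in>UNIV. \<gamma> $ i)) * L) \<le> B F \<gamma> x s"
    using weighted_value_lower[OF a assms(2,3)] weighted_value_le_Bellman[OF assms a] by (rule order_trans)
  then show ?thesis
    using Bellman_upper[OF assms] by (simp add: abs_le_iff)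
qed

lemma objective_lipschitz:
  assumes F: "F \<in> N se xe" and x: "x \<in> X" and a: "a \<in> A"
    and \<gamma>1: "\<gamma>1 \<in> nonneg" and \<gamma>2: "\<gamma>2 \<in> nonneg" and \<mu>: "\<mu> \<in> nonneg"
  shows "objective F \<gamma>1 \<mu> x s a \<le> objective F \<gamma>2 \<mu> x s a + L * (\<Sum>i\<in>UNIV. \<bar>\<gamma>1 $ i - \<gamma>2 $ i\<bar>)"
proof -
  define d where "d = (\<Sum>i\<in>UNIV. \<bar>\<gamma>1 $ i - \<gamma>2 $ i\<bar>)"
  define G where "G = (\<Sum>i\<in>UNIV. supnorm X A (g i))"
  define y where "y = zeta x a s"
  have "\<gamma>1 $ i * g i x a s + \<mu> $ i * (g i x a s - gbar i)
      \<le> \<gamma>2 $ i * g i x a s + \<mu> $ i * (g i x a s - gbar i) + \<bar>\<gamma>1 $ i - \<gamma>2 $ i\<bar> * G" for i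
  proof -
    have "(\<gamma>1 $ i - \<gamma>2 $ i) * g i x a s \<le> \<bar>\<gamma>1 $ i - \<gamma>2 $ i\<bar> * \<bar>g i x a s\<bar>"
      by (simp flip: abs_mult)
    also have "\<dots> \<le> \<bar>\<gamma>1 $ i - \<gamma>2 $ i\<bar> * G"
      using abs_g_le_sum[OF x a, of i s] unfolding G_def by (intro mult_left_mono) auto
    finally have "(\<gamma>1 $ i - \<gamma>2 $ i) * g i x a s \<le> \<bar>\<gamma>1 $ i - \<gamma>2 $ i\<bar> * G" .
    then show ?thesis
      by (simp add: algebra_simps)
  qed
  then have "(\<Sum>i\<in>UNIV. \<gamma>1 $ i * g i x a s + \<mu> $ i * (g i x a s - gbar i))
      \<le> (\<Sum>i\<in>UNIV. \<gamma>2 $ i * g i x a s + \<mu> $ i * (g i x a s - gbar i) + \<bar>\<gamma>1 $ i - \<gamma>2 $ i\<bar> * G)"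
    by (rule sum_mono)
  then have lin: "(\<Sum>i\<in>UNIV. \<gamma>1 $ i * g i x a s + \<mu> $ i * (g i x a s - gbar i))
      \<le> (\<Sum>i\<in>UNIV. \<gamma>2 $ i * g i x a s + \<mu> $ i * (g i x a s - gbar i)) + d * G"
    by (simp add: d_def sum.distrib sum_distrib_right)
  have "F (\<gamma>1 + \<mu>) y s' - F (\<gamma>2 + \<mu>) y s' \<le> L * d" for s'
  proof -
    have "\<bar>F (\<gamma>1 + \<mu>) y s' - F (\<gamma>2 + \<mu>) y s'\<bar> \<le> L * (\<Sum>i\<in>UNIV. \<bar>(\<gamma>1 + \<mu>) $ i - (\<gamma>2 + \<mu>) $ i\<bar>)"
      unfolding y_def by (rule Nspace_lipschitz[OF F zeta_in_X[OF x a] nonneg_add[OF \<gamma>1 \<mu>] nonneg_add[OF \<gamma>2 \<mu>]])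
    then show ?thesis
      by (simp add: d_def abs_le_iff)
  qed
  then have "(\<Sum>s'\<in>UNIV. Ptr s s' * (F (\<gamma>1 + \<mu>) y s' - F (\<gamma>2 + \<mu>) y s')) \<le> L * d"
    by (rule sum_Ptr_le)
  then have cont: "(\<Sum>s'\<in>UNIV. Ptr s s' * F (\<gamma>1 + \<mu>) y s') \<le> (\<Sum>s'\<in>UNIV. Ptr s s' * F (\<gamma>2 + \<mu>) y s') + L * d"
    by (simp add: right_diff_distrib sum_subtractf)
  have "d * G \<le> d * ((1 - beta) * L)"
    using supnorm_nonneg[OF x] unfolding Lconst_eq G_def d_def by (intro mult_left_mono) auto
  then show ?thesis
    unfolding objective_def y_def[symmetric] d_def[symmetric]
    using lin mult_left_mono[OF cont beta_nonneg] by (simp add: algebra_simps)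
qed

lemma Bellman_one_sided_lipschitz:
  assumes F: "F \<in> N se xe" and x: "x \<in> X" and \<gamma>1: "\<gamma>1 \<in> nonneg" and \<gamma>2: "\<gamma>2 \<in> nonneg"
  shows "B F \<gamma>1 x s \<le> B F \<gamma>2 x s + L * (\<Sum>i\<in>UNIV. \<bar>\<gamma>1 $ i - \<gamma>2 $ i\<bar>)"
proof -
  define c where "c = L * (\<Sum>i\<in>UNIV. \<bar>\<gamma>1 $ i - \<gamma>2 $ i\<bar>)"
  have "B F \<gamma>1 x s - c \<le> (SUP a\<in>Atil A p x s. objective F \<gamma>2 \<mu> x s a)" if \<mu>: "\<mu> \<in> nonneg" for \<mu>
  proof -
    have "(SUP a\<in>Atil A p x s. objective F \<gamma>1 \<mu> x s a) \<le> (SUP a\<in>Atil A p x s. objective F \<gamma>2 \<mu> x s a) + c"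
    proof (rule cSUP_least[OF Atil_nonempty[OF x]])
      fix a assume a: "a \<in> Atil A p x s"
      show "objective F \<gamma>1 \<mu> x s a \<le> (SUP a\<in>Atil A p x s. objective F \<gamma>2 \<mu> x s a) + c"
        using objective_lipschitz[OF F x _ \<gamma>1 \<gamma>2 \<mu>, of a s] objective_le_SUP[OF a, of F \<gamma>2 \<mu>] a Atil_subset
        unfolding c_def by fastforce
    qed
    then show ?thesis
      using Bellman_le_SUP_objective[OF F x \<gamma>1 \<mu>, of s] by linarith
  qed
  then have "B F \<gamma>1 x s - c \<le> B F \<gamma>2 x s"
    unfolding Bellman_eq[of F \<gamma>2] using zero_in_nonneg by (intro cINF_greatest) auto
  then show ?thesis
    by (simp add: c_def)
qed

lemma Bellman_lipschitz:
  assumes "F \<in> N se xe" "x \<in> X" "\<gamma>1 \<in> nonneg" "\<gamma>2 \<in> nonneg"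
  shows "\<bar>B F \<gamma>1 x s - B F \<gamma>2 x s\<bar> \<le> L * (\<Sum>i\<in>UNIV. \<bar>\<gamma>1 $ i - \<gamma>2 $ i\<bar>)"
  using Bellman_one_sided_lipschitz[OF assms, of s] Bellman_one_sided_lipschitz[OF assms(1,2,4,3), of s]
  by (simp add: abs_le_iff abs_minus_commute)

lemma expected_continuation_convex:
  "F \<in> N se xe \<Longrightarrow> x \<in> X \<Longrightarrow> a \<in> A \<Longrightarrow> convex_on nonneg (\<lambda>\<gamma>. \<Sum>s'\<in>UNIV. Ptr s s' * F \<gamma> (zeta x a s) s')"
  by (intro convex_on_sum_scaled convex_nonneg Ptr_nonneg Nspace_convex zeta_in_X) auto

lemma objective_convex:
  assumes F: "F \<in> N se xe" and x: "x \<in> X" and a: "a \<in> A"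
  shows "convex_on (nonneg \<times> nonneg) (\<lambda>(\<gamma>, \<mu>). objective F \<gamma> \<mu> x s a)"
proof -
  have "linear (\<lambda>(\<gamma>, \<mu>). \<Sum>i\<in>UNIV. \<gamma> $ i * g i x a s + \<mu> $ i * (g i x a s - gbar i))"
    by (intro linearI) (auto simp: algebra_simps sum_distrib_left simp flip: sum.distrib)
  then have multipliers: "convex_on (nonneg \<times> nonneg)
      (\<lambda>(\<gamma>, \<mu>). \<Sum>i\<in>UNIV. \<gamma> $ i * g i x a s + \<mu> $ i * (g i x a s - gbar i))"
    by (intro convex_on_linear convex_Times convex_nonneg)
  have "linear (\<lambda>(\<gamma>::real^'i, \<mu>). \<gamma> + \<mu>)"
    by (intro linearI) (auto simp: scaleR_add_right)
  then have continuation: "convex_on (nonneg \<times> nonneg)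
      (\<lambda>z. \<Sum>s'\<in>UNIV. Ptr s s' * F ((\<lambda>(\<gamma>, \<mu>). \<gamma> + \<mu>) z) (zeta x a s) s')"
    using nonneg_add
    by (intro convex_on_compose_linear[OF expected_continuation_convex[OF F x a]] convex_Times convex_nonneg) auto
  have "convex_on (nonneg \<times> nonneg) (\<lambda>z. r x a s
      + (\<lambda>(\<gamma>, \<mu>). \<Sum>i\<in>UNIV. \<gamma> $ i * g i x a s + \<mu> $ i * (g i x a s - gbar i)) z
      + beta * (\<Sum>s'\<in>UNIV. Ptr s s' * F ((\<lambda>(\<gamma>, \<mu>). \<gamma> + \<mu>) z) (zeta x a s) s'))"
    using multipliers continuation beta_nonneg
    by (intro convex_on_add convex_on_cmul) (simp_all add: convex_on_const convex_Times convex_nonneg)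
  then show ?thesis
    by (simp add: objective_def split_def)
qed

lemma Bellman_convex:
  assumes F: "F \<in> N se xe" and x: "x \<in> X"
  shows "convex_on nonneg (\<lambda>\<gamma>. B F \<gamma> x s)"
proof -
  have "convex_on (nonneg \<times> nonneg) (\<lambda>z. SUP a\<in>Atil A p x s. (\<lambda>(\<gamma>, \<mu>). objective F \<gamma> \<mu> x s a) z)"
    using objective_convex[OF F x] Atil_subset
    by (intro convex_on_SUP_finite finite_Atil Atil_nonempty x) blast
  then have "convex_on nonneg (\<lambda>\<gamma>. INF \<mu>\<in>nonneg. SUP a\<in>Atil A p x s. objective F \<gamma> \<mu> x s a)"
    using convex_on_INF_partial[where D = nonneg] bdd_below_SUP_objective[OF F x] zero_in_nonneg
    by fastforce
  then show ?thesis
    by (simp add: Bellman_eq)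
qed

lemma Bellman_continuous:
  assumes "F \<in> N se xe" "x \<in> X"
  shows "continuous_on nonneg (\<lambda>\<gamma>. B F \<gamma> x s)"
  using Lconst_nonneg[OF assms(2)] Bellman_lipschitz[OF assms] by (rule l1_lipschitz_imp_continuous_on)

lemma Bellman_in_Mspace:
  assumes xe: "xe ` enum_index X \<subseteq> X" and F: "F \<in> N se xe"
  shows "B F \<in> Mspace se xe X"
proof (rule Mspace_if_continuous_linear_growth[OF xe, where c = "max L 0"])
  fix x s and \<gamma> :: "real^'i" assume x: "x \<in> X" and \<gamma>: "\<gamma> \<in> nonneg"
  have "\<bar>B F \<gamma> x s\<bar> \<le> (1 + (\<Sum>i\<in>UNIV. \<gamma> $ i)) * L"
    by (rule abs_Bellman_le[OF F x \<gamma>])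
  also have "\<dots> \<le> (1 + (\<Sum>i\<in>UNIV. \<gamma> $ i)) * max L 0"
    using sum_component_nonneg[OF \<gamma>] by (intro mult_left_mono) auto
  finally show "\<bar>B F \<gamma> x s\<bar> \<le> max L 0 * (1 + (\<Sum>i\<in>UNIV. \<gamma> $ i))"
    by (simp add: mult.commute)
qed (simp_all add: Bellman_continuous[OF F])

lemma Bellman_maps_Nspace:
  assumes "xe ` enum_index X \<subseteq> X"
  shows "B ` N se xe \<subseteq> N se xe"
proof
  fix G assume "G \<in> B ` N se xe"
  then obtain F where F: "F \<in> N se xe" and G: "G = B F"
    by blast
  show "G \<in> N se xe"
    unfolding G Nspace_def
    using Bellman_in_Mspace[OF assms F] Bellman_convex[OF F] Bellman_lipschitz[OF F]
      weighted_value_le_Bellman[OF F] Bellman_upper[OF F]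
    by (simp add: weighted_value_def)
qed

end

theorem lemma3p5:
  fixes Ptr :: "'s::finite \<Rightarrow> 's \<Rightarrow> real"
    and A :: "(real^'n) set"
    and X :: "(real^'m) set"
    and zeta :: "real^'m \<Rightarrow> real^'n \<Rightarrow> 's \<Rightarrow> real^'m"
    and p r :: "real^'m \<Rightarrow> real^'n \<Rightarrow> 's \<Rightarrow> real"
    and g :: "'i::finite \<Rightarrow> real^'m \<Rightarrow> real^'n \<Rightarrow> 's \<Rightarrow> real"
    and gbar :: "'i \<Rightarrow> real"
    and beta :: real
    and se :: "nat \<Rightarrow> 's"
    and xe :: "nat \<Rightarrow> real^'m"
  assumes pi_pos: "\<And>s s'. Ptr s s' > 0"
    and pi_sum: "\<And>s. (\<Sum>s'\<in>UNIV. Ptr s s') = 1"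
    and A_fin: "finite A"
    and X_cnt: "countable X"
    and zeta_X: "\<And>x a s. x \<in> X \<Longrightarrow> a \<in> A \<Longrightarrow> zeta x a s \<in> X"
    and r_bdd: "\<exists>C. \<forall>x\<in>X. \<forall>a\<in>A. \<forall>s. \<bar>r x a s\<bar> \<le> C"
    and g_bdd: "\<And>i. \<exists>C. \<forall>x\<in>X. \<forall>a\<in>A. \<forall>s. \<bar>g i x a s\<bar> \<le> C"
    and beta: "0 < beta" "beta < 1"
    and se_enum: "bij_betw se {1..CARD('s)} UNIV"
    and xe_enum: "bij_betw xe (enum_index X) X"
    and feasible_exists: "\<And>x s. x \<in> X \<Longrightarrow> \<exists>a. feasible Ptr beta A zeta p g gbar x s a"
  shows "Bellman Ptr beta A zeta p r g gbar ` Nspace se xe X Ptr beta A zeta p r g gbar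
           \<subseteq> Nspace se xe X Ptr beta A zeta p r g gbar"
proof -
  interpret constrained_dp Ptr beta A X zeta p r g gbar
    using pi_pos pi_sum A_fin zeta_X r_bdd g_bdd beta feasible_exists
    by unfold_locales (auto intro: less_imp_le)
  show ?thesis
    using xe_enum by (intro Bellman_maps_Nspace) (simp add: bij_betw_def)
qed

end
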